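(* Let $p$ be a positive integer, $H$ a graph, $T$ a complete rooted ternary tree and $V\subseteq V(T(H))$ with $|OC(T,V)|>p$. Then there exists a minimal sequence of largest subtrees of $T$ with respect to $V$ lacking $p$.
   Context: Complete rooted ternary tree: rooted tree in which all root-leaf paths have the same number of edges and every non-leaf vertex has exactly 3 children. Graph $T(H)$: for $V(H)=\{1,\dots,m\}$, vertices $v^i$ ($v\in V(T)$, $1\le i\le m$), each $\{v^1,\dots,v^m\}$ spanning a copy $H^v$ of $H$, plus edges $u^iv^i$ for $uv\in E(T)$; for a subtree $T'$ of $T$, $T'(H)$ is the subgraph induced by the copies $H^v$, $v\in V(T')$. For $V\subseteq V(T(H))$, $OC(T,V)=\{u\in V(T): V(H^u)\cap V\neq\emptyset\}$. An immediate subtree of $T$ is the subtree consisting of a child of the root and all its descendants; an immediate subtree $T'$ is largest with respect to $V$ if $|OC(T,V)\cap V(T')|$ is maximum among the immediate subtrees. A sequence of largest subtrees of $T$ w.r.t. $V$ is $T_1,\dots,T_q$ with $T_1=T$, $V_1=V$, and for $i<q$, $T_{i+1}$ a largest immediate subtree of $T_i$ w.r.t. $V_i$ and $V_{i+1}=V_i\cap V(T_{i+1}(H))$. It is a minimal sequence lacking $p$ if $|OC(T_1,V_1)|-|OC(T_q,V_q)|\geq p$ while $|OC(T_1,V_1)|-|OC(T_{q-1},V_{q-1})|<p$. *)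

theory Defs
  imports Main
begin

text \<open>The complete rooted ternary tree of height d (all root-leaf paths have d edges)
is modelled canonically: vertices are the words over {0,1,2} of length at most d,
the root is the empty word, and the children of w are w@[0], w@[1], w@[2].\<close>

definition tree_verts :: "nat \<Rightarrow> nat list set" where
  "tree_verts d = {w. set w \<subseteq> {0,1,2} \<and> length w \<le> d}"

definition subtree_verts :: "nat \<Rightarrow> nat list \<Rightarrow> nat list set" where
  "subtree_verts d w = {u \<in> tree_verts d. \<exists>s. u = w @ s}"

definition is_graph :: "nat \<Rightarrow> (nat \<Rightarrow> nat \<Rightarrow> bool) \<Rightarrow> bool" where
  "is_graph m E \<longleftrightarrow> (\<forall>i j. E i j \<longrightarrow> i \<in> {1..m} \<and> j \<in> {1..m} \<and> E j i \<and> i \<noteq> j)"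

text \<open>Vertex set of T'(H) for the subtree T' rooted at w: vertex v^i is the pair (v,i).\<close>
definition TH_verts :: "nat \<Rightarrow> nat \<Rightarrow> nat list \<Rightarrow> (nat list \<times> nat) set" where
  "TH_verts d m w = subtree_verts d w \<times> {1..m}"

definition OC :: "nat \<Rightarrow> nat list \<Rightarrow> (nat list \<times> nat) set \<Rightarrow> nat list set" where
  "OC d w V = {u \<in> subtree_verts d w. \<exists>i. (u, i) \<in> V}"

definition largest_immediate ::
    "nat \<Rightarrow> (nat list \<times> nat) set \<Rightarrow> nat list \<Rightarrow> nat \<Rightarrow> bool" where
  "largest_immediate d V w c \<longleftrightarrow> c < 3 \<and> length w < d \<and>
     (\<forall>c'<3. card (OC d w V \<inter> subtree_verts d (w @ [c']))
              \<le> card (OC d w V \<inter> subtree_verts d (w @ [c])))"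

text \<open>A sequence of largest subtrees T_1,...,T_q, given by the list of their roots,
together with V_1 = V and V_(k+1) = V_k \<inter> V(T_(k+1)(H)).\<close>
definition V_seq :: "nat \<Rightarrow> nat \<Rightarrow> (nat list \<times> nat) set \<Rightarrow> nat list list \<Rightarrow> nat
    \<Rightarrow> (nat list \<times> nat) set" where
  "V_seq d m V ws k = V \<inter> (\<Inter>j\<in>{1..k}. TH_verts d m (ws ! j))"

definition seq_largest :: "nat \<Rightarrow> nat \<Rightarrow> (nat list \<times> nat) set \<Rightarrow> nat list list \<Rightarrow> bool" where
  "seq_largest d m V ws \<longleftrightarrow> ws \<noteq> [] \<and> ws ! 0 = [] \<and>
     (\<forall>k. Suc k < length ws \<longrightarrow>
        (\<exists>c. ws ! Suc k = ws ! k @ [c] \<and> largest_immediate d (V_seq d m V ws k) (ws ! k) c))"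

definition minimal_lacking ::
    "nat \<Rightarrow> nat \<Rightarrow> (nat list \<times> nat) set \<Rightarrow> nat \<Rightarrow> nat list list \<Rightarrow> bool" where
  "minimal_lacking d m V p ws \<longleftrightarrow> seq_largest d m V ws \<and> length ws \<ge> 2 \<and>
     (let q = length ws in
       int (card (OC d [] V)) - int (card (OC d (ws ! (q-1)) (V_seq d m V ws (q-1)))) \<ge> int p \<and>
       int (card (OC d [] V)) - int (card (OC d (ws ! (q-2)) (V_seq d m V ws (q-2)))) < int p)"

end

theory Submission
  imports Defs
begin

text \<open>Descend greedily from the root, always into a child subtree containing the most occupied
  copies. Along this path the number of occupied copies below the current vertex starts at
  \<open>|OC(T,V)| > p\<close> and is at most 1 at the leaf, so it first drops by at least \<open>p\<close> at some
  positive depth; the path up to that depth is the required sequence. Since every \<open>V\<^sub>k\<close> keeps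
  all of \<open>V\<close> inside \<open>T\<^sub>k(H)\<close>, the counts in the definition of a sequence of largest subtrees
  are exactly these counts.\<close>

lemma ex_argmax_below:
  fixes f :: "nat \<Rightarrow> 'a::linorder"
  assumes "0 < n"
  shows "\<exists>c<n. \<forall>c'<n. f c' \<le> f c"
proof -
  have "Max (f ` {..<n}) \<in> f ` {..<n}"
    using assms by (intro Max_in) auto
  then obtain c where "c < n" "f c = Max (f ` {..<n})" by auto
  then show ?thesis by (intro exI[of _ c]) auto
qed

lemma ex_first_index:
  fixes P :: "nat \<Rightarrow> bool"
  assumes "P k" and "\<not> P 0"
  shows "\<exists>n\<le>k. 0 < n \<and> P n \<and> \<not> P (n - 1)"
proof -
  define n where "n = (LEAST n. P n)"
  have "P n" "n \<le> k"
    unfolding n_def using LeastI[of P k] Least_le[of P k] assms(1) by auto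
  moreover have "0 < n"
    using \<open>P n\<close> assms(2) by (cases n) auto
  moreover have "\<not> P (n - 1)"
    using \<open>0 < n\<close> not_less_Least[of "n - 1" P] unfolding n_def by simp
  ultimately show ?thesis by blast
qed

lemma subtree_verts_append_subset: "subtree_verts d (w @ s) \<subseteq> subtree_verts d w"
  unfolding subtree_verts_def by auto

lemma subtree_verts_at_depth:
  assumes "d \<le> length w"
  shows "subtree_verts d w \<subseteq> {w}"
proof
  fix u assume "u \<in> subtree_verts d w"
  then obtain s where "u = w @ s" "length w + length s \<le> d"
    unfolding subtree_verts_def tree_verts_def by auto
  then have "length w + length s \<le> length w"
    using assms by linarith
  then show "u \<in> {w}" using \<open>u = w @ s\<close> by simp
qed

definition occupied_below :: "nat \<Rightarrow> (nat list \<times> nat) set \<Rightarrow> nat list \<Rightarrow> nat" where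
  "occupied_below d V w = card (OC d [] V \<inter> subtree_verts d w)"

lemma occupied_below_root: "occupied_below d V [] = card (OC d [] V)"
proof -
  have "OC d [] V \<subseteq> subtree_verts d []" unfolding OC_def by auto
  then show ?thesis unfolding occupied_below_def by (simp add: Int_absorb2)
qed

lemma occupied_below_at_depth:
  assumes "d \<le> length w"
  shows "occupied_below d V w \<le> 1"
proof -
  have "OC d [] V \<inter> subtree_verts d w \<subseteq> {w}"
    using subtree_verts_at_depth[OF assms] by blast
  then show ?thesis
    unfolding occupied_below_def using card_mono[of "{w}"] by fastforce
qed

fun greedy_path :: "nat \<Rightarrow> (nat list \<times> nat) set \<Rightarrow> nat \<Rightarrow> nat list" where
  "greedy_path d V 0 = []"
| "greedy_path d V (Suc k) =
    (let w = greedy_path d V k in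
     if length w < d
     then w @ [SOME c. c < 3 \<and> (\<forall>c'<3. occupied_below d V (w @ [c']) \<le> occupied_below d V (w @ [c]))]
     else w)"

lemma greedy_path_Suc:
  assumes "length (greedy_path d V k) < d"
  obtains c where "greedy_path d V (Suc k) = greedy_path d V k @ [c]" and "c < 3"
    and "\<forall>c'<3. occupied_below d V (greedy_path d V k @ [c'])
                  \<le> occupied_below d V (greedy_path d V k @ [c])"
proof -
  let ?w = "greedy_path d V k"
  let ?P = "\<lambda>c. c < 3 \<and> (\<forall>c'<3. occupied_below d V (?w @ [c']) \<le> occupied_below d V (?w @ [c]))"
  obtain c0 where "?P c0"
    using ex_argmax_below[of 3 "\<lambda>c. occupied_below d V (?w @ [c])"] by auto
  then have "?P (SOME c. ?P c)" by (rule someI)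
  moreover have "greedy_path d V (Suc k) = ?w @ [SOME c. ?P c]"
    using assms by (simp add: Let_def)
  ultimately show ?thesis by (intro that) auto
qed

lemma length_greedy_path: "k \<le> d \<Longrightarrow> length (greedy_path d V k) = k"
  by (induction k) (auto simp: Let_def)

lemma greedy_path_prefix: "j \<le> k \<Longrightarrow> \<exists>s. greedy_path d V k = greedy_path d V j @ s"
proof (induction k)
  case (Suc k)
  then show ?case
    by (cases "j = Suc k") (auto simp: Let_def)
qed simp

lemma OC_V_seq:
  assumes "V \<subseteq> TH_verts d m []"
    and "\<And>j. j \<in> {1..k} \<Longrightarrow> subtree_verts d w \<subseteq> subtree_verts d (ws ! j)"
  shows "OC d w (V_seq d m V ws k) = OC d [] V \<inter> subtree_verts d w"
proof -
  have "\<exists>i. (u, i) \<in> V_seq d m V ws k" if "u \<in> subtree_verts d w" "(u, i) \<in> V" for u i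
  proof -
    have "i \<in> {1..m}" using assms(1) \<open>(u, i) \<in> V\<close> unfolding TH_verts_def by auto
    then show ?thesis
      using that assms(2) unfolding V_seq_def TH_verts_def by blast
  qed
  moreover have "subtree_verts d w \<subseteq> subtree_verts d []"
    using subtree_verts_append_subset[of d "[]" w] by simp
  ultimately show ?thesis
    unfolding OC_def V_seq_def by blast
qed

lemma OC_greedy_seq:
  assumes "V \<subseteq> TH_verts d m []" and "k \<le> n"
  shows "OC d (map (greedy_path d V) [0..<Suc n] ! k)
             (V_seq d m V (map (greedy_path d V) [0..<Suc n]) k)
           = OC d [] V \<inter> subtree_verts d (greedy_path d V k)"
proof -
  let ?ws = "map (greedy_path d V) [0..<Suc n]"
  have nth: "?ws ! j = greedy_path d V j" if "j \<le> n" for j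
    using that by (simp add: nth_map_upt del: upt_Suc)
  have "subtree_verts d (greedy_path d V k) \<subseteq> subtree_verts d (?ws ! j)" if "j \<in> {1..k}" for j
    using that assms(2) nth greedy_path_prefix[of j k d V] subtree_verts_append_subset
    by (metis atLeastAtMost_iff order.trans)
  then show ?thesis
    using OC_V_seq[OF assms(1)] nth[OF assms(2)] by simp
qed

lemma seq_largest_greedy:
  assumes "V \<subseteq> TH_verts d m []" and "n \<le> d"
  shows "seq_largest d m V (map (greedy_path d V) [0..<Suc n])"
  unfolding seq_largest_def
proof (intro conjI allI impI)
  let ?ws = "map (greedy_path d V) [0..<Suc n]"
  show "?ws \<noteq> []" and "?ws ! 0 = []"
    by (simp_all add: nth_map_upt del: upt_Suc)
  fix k assume "Suc k < length ?ws"
  then have k: "Suc k \<le> n" by simp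
  then have nth: "?ws ! k = greedy_path d V k" "?ws ! Suc k = greedy_path d V (Suc k)"
    by (simp_all add: nth_map_upt del: upt_Suc)
  have len: "length (greedy_path d V k) < d"
    using k assms(2) length_greedy_path[of k d V] by simp
  have counts: "card (OC d (?ws ! k) (V_seq d m V ?ws k) \<inter> subtree_verts d (?ws ! k @ [c']))
      = occupied_below d V (greedy_path d V k @ [c'])" for c'
  proof -
    have "subtree_verts d (greedy_path d V k) \<inter> subtree_verts d (greedy_path d V k @ [c'])
        = subtree_verts d (greedy_path d V k @ [c'])"
      using subtree_verts_append_subset by blast
    then show ?thesis
      using OC_greedy_seq[OF assms(1), of k n] k nth(1)
      unfolding occupied_below_def by (simp add: Int_assoc)
  qed
  obtain c where "greedy_path d V (Suc k) = greedy_path d V k @ [c]" "c < 3"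
    "\<forall>c'<3. occupied_below d V (greedy_path d V k @ [c'])
              \<le> occupied_below d V (greedy_path d V k @ [c])"
    using greedy_path_Suc[OF len] .
  then show "\<exists>c. ?ws ! Suc k = ?ws ! k @ [c] \<and> largest_immediate d (V_seq d m V ?ws k) (?ws ! k) c"
    using len nth unfolding largest_immediate_def counts by auto
qed

theorem lemma4:
  fixes p d m :: nat and E :: "nat \<Rightarrow> nat \<Rightarrow> bool"
    and V :: "(nat list \<times> nat) set"
  assumes "p > 0"
    and "is_graph m E"
    and "V \<subseteq> TH_verts d m []"
    and "card (OC d [] V) > p"
  shows "\<exists>ws. minimal_lacking d m V p ws"
proof -
  define lacks where
    "lacks k \<longleftrightarrow> int (card (OC d [] V)) - int (occupied_below d V (greedy_path d V k)) \<ge> int p" for k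
  have "lacks d"
    using occupied_below_at_depth[of d "greedy_path d V d" V] length_greedy_path[of d d V] assms(4)
    unfolding lacks_def by simp
  moreover have "\<not> lacks 0"
    using assms(1) occupied_below_root[of d V] unfolding lacks_def by simp
  ultimately obtain n where "n \<le> d" "0 < n" "lacks n" "\<not> lacks (n - 1)"
    using ex_first_index[of lacks d] by blast
  then have "minimal_lacking d m V p (map (greedy_path d V) [0..<Suc n])"
    using seq_largest_greedy[OF assms(3)] OC_greedy_seq[OF assms(3), of n n]
      OC_greedy_seq[OF assms(3), of "n - 1" n]
    unfolding minimal_lacking_def lacks_def occupied_below_def by simp
  then show ?thesis by blast
qed

end
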